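(* Let $A$ be a C*-algebra and $A_1,A_2\subset A$ two C*-subalgebras. Then $A_1$ and $A_2$ mutually commute in $A$ (every element of $A_1$ commutes with every element of $A_2$) if and only if the monotone map $$r: C(A)\to C(A_1)\times C(A_2),\qquad C\mapsto (C\cap A_1,\,C\cap A_2)$$ has a left adjoint.
   Context: All C*-algebras are unital and subalgebras contain the unit. For a C*-algebra $B$, $C(B)$ denotes the poset of commutative C*-subalgebras of $B$ ordered by inclusion; $C(A_1)\times C(A_2)$ carries the product order. Posets are regarded as categories, so adjoints are Galois connections. *)

theory Defs
  imports "HOL-Analysis.Analysis"
begin

class cstar_algebra = real_normed_algebra_1 + banach +
  fixes scaleC :: "complex \<Rightarrow> 'a \<Rightarrow> 'a"
    and star :: "'a \<Rightarrow> 'a"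
  assumes scaleC_add_right: "scaleC a (x + y) = scaleC a x + scaleC a y"
    and scaleC_add_left: "scaleC (a + b) x = scaleC a x + scaleC b x"
    and scaleC_scaleC: "scaleC a (scaleC b x) = scaleC (a * b) x"
    and scaleC_one: "scaleC 1 x = x"
    and scaleC_of_real: "scaleC (complex_of_real r) x = scaleR r x"
    and norm_scaleC: "norm (scaleC a x) = cmod a * norm x"
    and mult_scaleC_left: "scaleC a x * y = scaleC a (x * y)"
    and mult_scaleC_right: "x * scaleC a y = scaleC a (x * y)"
    and star_star: "star (star x) = x"
    and star_add: "star (x + y) = star x + star y"
    and star_scaleC: "star (scaleC a x) = scaleC (cnj a) (star x)"
    and star_mult: "star (x * y) = star y * star x"
    and cstar_identity: "norm (star x * x) = (norm x)\<^sup>2"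

definition csubalg :: "'a::cstar_algebra set \<Rightarrow> bool" where
  "csubalg B \<longleftrightarrow> 1 \<in> B
     \<and> (\<forall>x\<in>B. \<forall>y\<in>B. x + y \<in> B)
     \<and> (\<forall>a. \<forall>x\<in>B. scaleC a x \<in> B)
     \<and> (\<forall>x\<in>B. \<forall>y\<in>B. x * y \<in> B)
     \<and> (\<forall>x\<in>B. star x \<in> B)
     \<and> closed B"

definition commutative_set :: "'a::times set \<Rightarrow> bool" where
  "commutative_set B \<longleftrightarrow> (\<forall>x\<in>B. \<forall>y\<in>B. x * y = y * x)"

definition CC :: "'a::cstar_algebra set \<Rightarrow> 'a set set" where
  "CC B = {C. csubalg C \<and> commutative_set C \<and> C \<subseteq> B}"

definition rmap :: "'a set \<Rightarrow> 'a set \<Rightarrow> 'a set \<Rightarrow> 'a set \<times> 'a set" where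
  "rmap A1 A2 C = (C \<inter> A1, C \<inter> A2)"

definition pair_le :: "'a set \<times> 'a set \<Rightarrow> 'a set \<times> 'a set \<Rightarrow> bool" where
  "pair_le p q \<longleftrightarrow> fst p \<subseteq> fst q \<and> snd p \<subseteq> snd q"

text \<open>r has a left adjoint (posets as categories: Galois connection):
there is l : C(A1) x C(A2) -> C(A) with l p \<subseteq> C iff p \<le> r C.\<close>
definition has_left_adjoint_r :: "'a::cstar_algebra set \<Rightarrow> 'a set \<Rightarrow> bool" where
  "has_left_adjoint_r A1 A2 \<longleftrightarrow>
     (\<exists>l. (\<forall>p \<in> CC A1 \<times> CC A2. l p \<in> CC UNIV)
        \<and> (\<forall>p \<in> CC A1 \<times> CC A2. \<forall>C \<in> CC UNIV. l p \<subseteq> C \<longleftrightarrow> pair_le p (rmap A1 A2 C)))"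

end

theory Submission
  imports Defs
begin

text \<open>If \<open>A\<^sub>1\<close> and \<open>A\<^sub>2\<close> commute, then for commutative subalgebras \<open>C\<^sub>i \<subseteq> A\<^sub>i\<close> the set
\<open>C\<^sub>1 \<union> C\<^sub>2\<close> is commutative and closed under the involution, so its double commutant is a
commutative C*-subalgebra containing it; hence there is a least one, and \<open>(C\<^sub>1, C\<^sub>2)\<close> maps
to it under the left adjoint.  Conversely, a self-adjoint \<open>x \<in> A\<^sub>1\<close> lies in some
\<open>C\<^sub>1 \<in> C(A\<^sub>1)\<close>, a self-adjoint \<open>y \<in> A\<^sub>2\<close> in some \<open>C\<^sub>2 \<in> C(A\<^sub>2)\<close>, and the unit of the
adjunction puts both into the commutative algebra \<open>l(C\<^sub>1, C\<^sub>2)\<close>; writing arbitrary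
elements as \<open>h + i k\<close> with \<open>h, k\<close> self-adjoint finishes the proof.\<close>

lemma additive_scaleC_right: "Modules.additive (scaleC a :: 'a::cstar_algebra \<Rightarrow> 'a)"
  by unfold_locales (rule scaleC_add_right)

lemma additive_scaleC_left: "Modules.additive (\<lambda>a. scaleC a (x::'a::cstar_algebra))"
  by unfold_locales (rule scaleC_add_left)

lemma additive_star: "Modules.additive (star :: 'a::cstar_algebra \<Rightarrow> 'a)"
  by unfold_locales (rule star_add)

lemmas scaleC_diff_right = Modules.additive.diff[OF additive_scaleC_right]
lemmas scaleC_minus_left = Modules.additive.minus[OF additive_scaleC_left]
lemmas star_diff = Modules.additive.diff[OF additive_star]

lemma commutative_set_subset: "commutative_set B \<Longrightarrow> A \<subseteq> B \<Longrightarrow> commutative_set A"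
  by (auto simp: commutative_set_def)

lemma commutative_set_Un:
  assumes "commutative_set A" "commutative_set B" "\<forall>x\<in>A. \<forall>y\<in>B. x * y = y * x"
  shows "commutative_set (A \<union> B)"
  using assms unfolding commutative_set_def by (metis Un_iff)

lemma csubalg_Int: "csubalg A \<Longrightarrow> csubalg B \<Longrightarrow> csubalg (A \<inter> B)"
  by (auto simp: csubalg_def)

lemma csubalg_Inter: "\<forall>C\<in>F. csubalg C \<Longrightarrow> csubalg (\<Inter>F)"
  unfolding csubalg_def by auto

lemma csubalg_diff:
  assumes "csubalg B" "x \<in> B" "y \<in> B"
  shows "x - y \<in> B"
proof -
  have "x - y = x + scaleC (-1) y"
    using scaleC_of_real[of "-1" y] by simp
  then show ?thesis
    using assms unfolding csubalg_def by metis
qed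

definition re_part :: "'a::cstar_algebra \<Rightarrow> 'a" where
  "re_part x = scaleC (1/2) (x + star x)"

definition im_part :: "'a::cstar_algebra \<Rightarrow> 'a" where
  "im_part x = scaleC (-\<i>/2) (x - star x)"

lemma star_re_part: "star (re_part x) = re_part x"
  by (simp add: re_part_def star_scaleC star_add star_star add.commute)

lemma star_im_part: "star (im_part x) = im_part x"
proof -
  have "star (im_part x) = scaleC (\<i>/2) (star x - x)"
    by (simp add: im_part_def star_scaleC star_diff star_star)
  also have "\<dots> = scaleC (-\<i>/2) (x - star x)"
    by (simp add: scaleC_diff_right scaleC_minus_left)
  finally show ?thesis
    by (simp add: im_part_def)
qed

lemma re_part_plus_im_part: "re_part x + scaleC \<i> (im_part x) = x"
proof -
  have "re_part x + scaleC \<i> (im_part x)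
      = scaleC (1/2) (x + star x) + scaleC (1/2) (x - star x)"
    by (simp add: re_part_def im_part_def scaleC_scaleC)
  also have "\<dots> = scaleC (1/2) x + scaleC (1/2) x"
    by (simp add: scaleC_add_right scaleC_diff_right)
  also have "\<dots> = x"
    by (simp add: scaleC_add_left[symmetric] scaleC_one)
  finally show ?thesis .
qed

lemma re_part_in_csubalg: "csubalg B \<Longrightarrow> x \<in> B \<Longrightarrow> re_part x \<in> B"
  unfolding re_part_def csubalg_def by blast

lemma im_part_in_csubalg: "csubalg B \<Longrightarrow> x \<in> B \<Longrightarrow> im_part x \<in> B"
  using csubalg_diff[of B x "star x"] unfolding im_part_def csubalg_def by blast

lemma commute_complex_combination:
  fixes h k h' k' :: "'a::cstar_algebra"
  assumes "h * h' = h' * h" "h * k' = k' * h" "k * h' = h' * k" "k * k' = k' * k"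
  shows "(h + scaleC \<i> k) * (h' + scaleC \<i> k') = (h' + scaleC \<i> k') * (h + scaleC \<i> k)"
proof -
  have expand: "(a + scaleC \<i> b) * (c + scaleC \<i> d)
      = a * c + (scaleC \<i> (b * c) + (scaleC \<i> (a * d) + scaleC \<i> (scaleC \<i> (b * d))))"
    for a b c d :: 'a
    by (simp only: distrib_left distrib_right mult_scaleC_left mult_scaleC_right
        scaleC_add_right add.assoc)
  show ?thesis
    unfolding expand using assms by (metis add.left_commute)
qed

lemma commute_if_selfadjoint_commute:
  fixes A1 A2 :: "'a::cstar_algebra set"
  assumes "csubalg A1" "csubalg A2"
    and sa: "\<And>x y. x \<in> A1 \<Longrightarrow> star x = x \<Longrightarrow> y \<in> A2 \<Longrightarrow> star y = y \<Longrightarrow> x * y = y * x"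
    and "x \<in> A1" "y \<in> A2"
  shows "x * y = y * x"
proof -
  have parts: "re_part x \<in> A1" "im_part x \<in> A1" "re_part y \<in> A2" "im_part y \<in> A2"
    using assms by (simp_all add: re_part_in_csubalg im_part_in_csubalg)
  have "(re_part x + scaleC \<i> (im_part x)) * (re_part y + scaleC \<i> (im_part y))
      = (re_part y + scaleC \<i> (im_part y)) * (re_part x + scaleC \<i> (im_part x))"
    by (intro commute_complex_combination; rule sa; simp add: parts star_re_part star_im_part)
  then show ?thesis
    by (simp only: re_part_plus_im_part)
qed

definition commutant :: "'a::cstar_algebra set \<Rightarrow> 'a set" where
  "commutant T = {x. \<forall>t\<in>T. x * t = t * x}"

lemma subset_double_commutant: "T \<subseteq> commutant (commutant T)"
  by (auto simp: commutant_def)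

lemma closed_commutant: "closed (commutant T)"
proof -
  have "commutant T = (\<Inter>t\<in>T. {x. x * t - t * x = 0})"
    by (auto simp: commutant_def)
  moreover have "closed {x. x * t - t * x = 0}" for t :: 'a
    by (intro closed_Collect_eq continuous_intros)
  ultimately show ?thesis
    by auto
qed

lemma csubalg_commutant:
  fixes T :: "'a::cstar_algebra set"
  assumes star_closed: "\<forall>t\<in>T. star t \<in> T"
  shows "csubalg (commutant T)"
  unfolding csubalg_def
proof (intro conjI ballI allI closed_commutant)
  fix x y assume x: "x \<in> commutant T" and y: "y \<in> commutant T"
  show "x + y \<in> commutant T"
    using x y by (simp add: commutant_def distrib_left distrib_right)
  show "x * y \<in> commutant T"
    using x y by (simp add: commutant_def) (metis mult.assoc)
next
  fix a x assume "x \<in> commutant T"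
  then show "scaleC a x \<in> commutant T"
    by (simp add: commutant_def mult_scaleC_left mult_scaleC_right)
next
  fix x assume x: "x \<in> commutant T"
  show "star x \<in> commutant T"
    unfolding commutant_def
  proof (intro CollectI ballI)
    fix t assume "t \<in> T"
    then have "x * star t = star t * x"
      using x star_closed by (simp add: commutant_def)
    then have "star (star t * x) = star (x * star t)"
      by simp
    then show "star x * t = t * star x"
      by (simp add: star_mult star_star)
  qed
qed (simp add: commutant_def)

lemma double_commutant_in_CC:
  fixes T :: "'a::cstar_algebra set"
  assumes star_closed: "\<forall>t\<in>T. star t \<in> T" and "commutative_set T"
  shows "commutant (commutant T) \<in> CC UNIV"
proof -
  have "T \<subseteq> commutant T"
    using assms(2) by (auto simp: commutant_def commutative_set_def)
  then have sub: "commutant (commutant T) \<subseteq> commutant T"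
    by (auto simp: commutant_def)
  have "commutative_set (commutant (commutant T))"
    unfolding commutative_set_def
  proof (intro ballI)
    fix x y assume "x \<in> commutant (commutant T)" "y \<in> commutant (commutant T)"
    then show "x * y = y * x"
      using sub unfolding commutant_def by blast
  qed
  moreover have "\<forall>t\<in>commutant T. star t \<in> commutant T"
    using csubalg_commutant[OF star_closed] by (simp add: csubalg_def)
  ultimately show ?thesis
    using csubalg_commutant by (simp add: CC_def)
qed

definition commutative_hull :: "'a::cstar_algebra set \<Rightarrow> 'a set" where
  "commutative_hull S = \<Inter>{C \<in> CC UNIV. S \<subseteq> C}"

lemma subset_commutative_hull: "S \<subseteq> commutative_hull S"
  by (auto simp: commutative_hull_def)

lemma commutative_hull_subset_iff: "C \<in> CC UNIV \<Longrightarrow> commutative_hull S \<subseteq> C \<longleftrightarrow> S \<subseteq> C"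
  unfolding commutative_hull_def by blast

lemma commutative_hull_in_CC:
  fixes S :: "'a::cstar_algebra set"
  assumes "\<forall>s\<in>S. star s \<in> S" and "commutative_set S"
  shows "commutative_hull S \<in> CC UNIV"
proof -
  let ?F = "{C \<in> CC UNIV. S \<subseteq> C}"
  have dc: "commutant (commutant S) \<in> ?F"
    using double_commutant_in_CC[OF assms] subset_double_commutant by blast
  have "csubalg (\<Inter>?F)"
    by (intro csubalg_Inter) (auto simp: CC_def)
  moreover have "commutative_set (\<Inter>?F)"
    using dc commutative_set_subset[of "commutant (commutant S)" "\<Inter>?F"]
    by (simp add: CC_def Inter_lower)
  ultimately show ?thesis
    by (simp add: commutative_hull_def CC_def)
qed

lemma selfadjoint_in_CC:
  fixes x :: "'a::cstar_algebra"
  assumes "csubalg A" "x \<in> A" "star x = x"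
  shows "\<exists>C\<in>CC A. x \<in> C"
proof -
  have hull: "commutative_hull {x} \<in> CC UNIV"
    using assms(3) by (intro commutative_hull_in_CC) (simp_all add: commutative_set_def)
  then have "csubalg (commutative_hull {x} \<inter> A)" "commutative_set (commutative_hull {x} \<inter> A)"
    using assms(1) by (auto simp: CC_def intro: csubalg_Int commutative_set_subset[of "commutative_hull {x}"])
  then have "commutative_hull {x} \<inter> A \<in> CC A"
    by (simp add: CC_def)
  moreover have "x \<in> commutative_hull {x} \<inter> A"
    using subset_commutative_hull[of "{x}"] assms(2) by blast
  ultimately show ?thesis
    by blast
qed

lemma has_left_adjoint_r_if_commute:
  fixes A1 A2 :: "'a::cstar_algebra set"
  assumes com: "\<forall>x\<in>A1. \<forall>y\<in>A2. x * y = y * x"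
  shows "has_left_adjoint_r A1 A2"
  unfolding has_left_adjoint_r_def
proof (intro exI[of _ "\<lambda>p. commutative_hull (fst p \<union> snd p)"] conjI ballI)
  fix p assume p: "p \<in> CC A1 \<times> CC A2"
  have star_closed: "\<forall>s\<in>fst p \<union> snd p. star s \<in> fst p \<union> snd p"
    using p by (auto simp: CC_def csubalg_def)
  have "fst p \<subseteq> A1" "snd p \<subseteq> A2" "commutative_set (fst p)" "commutative_set (snd p)"
    using p by (auto simp: CC_def)
  then have "commutative_set (fst p \<union> snd p)"
    using com by (intro commutative_set_Un) blast+
  with star_closed show "commutative_hull (fst p \<union> snd p) \<in> CC UNIV"
    by (rule commutative_hull_in_CC)
  fix C :: "'a set" assume C: "C \<in> CC UNIV"
  have "fst p \<union> snd p \<subseteq> C \<longleftrightarrow> pair_le p (rmap A1 A2 C)"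
    using p by (auto simp: pair_le_def rmap_def CC_def)
  then show "commutative_hull (fst p \<union> snd p) \<subseteq> C \<longleftrightarrow> pair_le p (rmap A1 A2 C)"
    by (simp only: commutative_hull_subset_iff[OF C])
qed

lemma commute_if_has_left_adjoint_r:
  fixes A1 A2 :: "'a::cstar_algebra set"
  assumes "csubalg A1" "csubalg A2" and "has_left_adjoint_r A1 A2"
  shows "\<forall>x\<in>A1. \<forall>y\<in>A2. x * y = y * x"
proof -
  obtain l where l_in: "\<forall>p \<in> CC A1 \<times> CC A2. l p \<in> CC UNIV"
    and adj: "\<forall>p \<in> CC A1 \<times> CC A2. \<forall>C \<in> CC UNIV. l p \<subseteq> C \<longleftrightarrow> pair_le p (rmap A1 A2 C)"
    using assms(3) unfolding has_left_adjoint_r_def by blast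
  have selfadjoint_commute: "x * y = y * x"
    if "x \<in> A1" "star x = x" "y \<in> A2" "star y = y" for x y
  proof -
    obtain C1 where "C1 \<in> CC A1" "x \<in> C1"
      using selfadjoint_in_CC[OF assms(1) \<open>x \<in> A1\<close> \<open>star x = x\<close>] by blast
    moreover obtain C2 where "C2 \<in> CC A2" "y \<in> C2"
      using selfadjoint_in_CC[OF assms(2) \<open>y \<in> A2\<close> \<open>star y = y\<close>] by blast
    ultimately have p: "(C1, C2) \<in> CC A1 \<times> CC A2" and "x \<in> C1" "y \<in> C2"
      by simp_all
    have unit: "l (C1, C2) \<in> CC UNIV"
      using l_in p by (rule bspec)
    have "pair_le (C1, C2) (rmap A1 A2 (l (C1, C2)))"
      using adj[rule_format, OF p unit] by blast
    then have "x \<in> l (C1, C2)" "y \<in> l (C1, C2)"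
      using \<open>x \<in> C1\<close> \<open>y \<in> C2\<close> by (auto simp: pair_le_def rmap_def)
    then show ?thesis
      using unit by (simp add: CC_def commutative_set_def)
  qed
  show ?thesis
    using commute_if_selfadjoint_commute[OF assms(1,2) selfadjoint_commute] by blast
qed

theorem mainTheorem2:
  fixes A1 A2 :: "'a::cstar_algebra set"
  assumes "csubalg A1" and "csubalg A2"
  shows "(\<forall>x\<in>A1. \<forall>y\<in>A2. x * y = y * x) \<longleftrightarrow> has_left_adjoint_r A1 A2"
  using has_left_adjoint_r_if_commute commute_if_has_left_adjoint_r[OF assms] by (rule iffI)

end
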